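(* Let $\mathcal{H}$ be a complex Hilbert space, let $A\in\mathcal{B}(\mathcal{H})$ be a nonzero positive operator, and let $\mathbb{A}=\begin{pmatrix}A&O\\O&A\end{pmatrix}$ acting on $\mathcal{H}\oplus\mathcal{H}$. Let $P,Q,R,S\in\mathcal{B}_A(\mathcal{H})$. Then for every $\lambda\in[0,1]$, $$\omega_{\mathbb{A}}\left[\begin{pmatrix}P&Q\\R&S\end{pmatrix}\right]\leq \frac{1}{2}\left(\|P\|_A+2\omega_A(S)+\sqrt{\|\lambda^2 PP^{\sharp_A}+QQ^{\sharp_A}\|_A}+\sqrt{\|(1-\lambda)^2 PP^{\sharp_A}+R^{\sharp_A}R\|_A}\right).$$
   Context: For a positive operator $A$ on $\mathcal{H}$, $\langle x,y\rangle_A:=\langle Ax,y\rangle$ and $\|x\|_A:=\sqrt{\langle x,x\rangle_A}$. $\mathcal{B}_A(\mathcal{H})$ is the set of $T\in\mathcal{B}(\mathcal{H})$ with $\mathcal{R}(T^*A)\subseteq\mathcal{R}(A)$; for such $T$, $T^{\sharp_A}$ denotes the unique solution $X$ of $AX=T^*A$ with $\mathcal{R}(X)\subseteq\overline{\mathcal{R}(A)}$ (equivalently $T^{\sharp_A}=A^\dagger T^*A$). $\mathcal{B}_{A^{1/2}}(\mathcal{H})$ is the set of $T$ with $\|Tx\|_A\le\lambda\|x\|_A$ for some $\lambda>0$ and all $x$. For $T\in\mathcal{B}_{A^{1/2}}(\mathcal{H})$: $\|T\|_A:=\sup\{\|Tx\|_A:\|x\|_A=1\}$ and $\omega_A(T):=\sup\{|\langle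 Tx,x\rangle_A|:\|x\|_A=1\}$. The same notions with $A$ replaced by the positive operator $\mathbb{A}$ on $\mathcal{H}\oplus\mathcal{H}$ give $\omega_{\mathbb{A}}$, $\|\cdot\|_{\mathbb{A}}$, where $\langle (x_1,x_2),(y_1,y_2)\rangle_{\mathbb{A}}=\langle x_1,y_1\rangle_A+\langle x_2,y_2\rangle_A$. *)

theory Defs
  imports "HOL-Analysis.Analysis"
begin

class scaleC =
  fixes scaleC :: "complex \<Rightarrow> 'a \<Rightarrow> 'a"

class complex_vector = scaleC + real_vector +
  assumes scaleC_add_right: "scaleC a (x + y) = scaleC a x + scaleC a y"
    and scaleC_add_left: "scaleC (a + b) x = scaleC a x + scaleC b x"
    and scaleC_scaleC: "scaleC a (scaleC b x) = scaleC (a * b) x"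
    and scaleC_one: "scaleC 1 x = x"
    and scaleR_scaleC: "scaleR r x = scaleC (complex_of_real r) x"

class complex_inner = complex_vector + real_normed_vector +
  fixes cinner :: "'a \<Rightarrow> 'a \<Rightarrow> complex"
  assumes cinner_commute: "cinner x y = cnj (cinner y x)"
    and cinner_add_left: "cinner (x + y) z = cinner x z + cinner y z"
    and cinner_scaleC_left: "cinner (scaleC r x) y = r * cinner x y"
    and cinner_ge_zero: "0 \<le> Re (cinner x x)"
    and cinner_eq_zero_iff: "cinner x x = 0 \<longleftrightarrow> x = 0"
    and norm_eq_sqrt_cinner: "norm x = sqrt (Re (cinner x x))"

class chilbert_space = complex_inner + complete_space

definition bounded_clinear :: "('a::complex_inner \<Rightarrow> 'a) \<Rightarrow> bool" where
  "bounded_clinear T \<longleftrightarrow>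
     (\<forall>x y. T (x + y) = T x + T y) \<and> (\<forall>c x. T (scaleC c x) = scaleC c (T x)) \<and>
     (\<exists>K. \<forall>x. norm (T x) \<le> norm x * K)"

definition adj :: "('a::complex_inner \<Rightarrow> 'a) \<Rightarrow> ('a \<Rightarrow> 'a)" where
  "adj T = (THE S. \<forall>x y. cinner (T x) y = cinner x (S y))"

definition positive_op :: "('a::complex_inner \<Rightarrow> 'a) \<Rightarrow> bool" where
  "positive_op A \<longleftrightarrow> bounded_clinear A \<and>
     (\<forall>x. Im (cinner (A x) x) = 0 \<and> 0 \<le> Re (cinner (A x) x))"

definition ipA :: "('a::complex_inner \<Rightarrow> 'a) \<Rightarrow> 'a \<Rightarrow> 'a \<Rightarrow> complex" where
  "ipA A x y = cinner (A x) y"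

definition normA :: "('a::complex_inner \<Rightarrow> 'a) \<Rightarrow> 'a \<Rightarrow> real" where
  "normA A x = sqrt (Re (ipA A x x))"

definition BA :: "('a::complex_inner \<Rightarrow> 'a) \<Rightarrow> ('a \<Rightarrow> 'a) set" where
  "BA A = {T. bounded_clinear T \<and> range (adj T \<circ> A) \<subseteq> range A}"

definition sharpA :: "('a::complex_inner \<Rightarrow> 'a) \<Rightarrow> ('a \<Rightarrow> 'a) \<Rightarrow> ('a \<Rightarrow> 'a)" where
  "sharpA A T = (THE X. bounded_clinear X \<and> (\<forall>x. A (X x) = adj T (A x)) \<and>
                         range X \<subseteq> closure (range A))"

definition opnormA :: "('a::complex_inner \<Rightarrow> 'a) \<Rightarrow> ('a \<Rightarrow> 'a) \<Rightarrow> real" where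
  "opnormA A T = Sup {normA A (T x) | x. normA A x = 1}"

definition omegaA :: "('a::complex_inner \<Rightarrow> 'a) \<Rightarrow> ('a \<Rightarrow> 'a) \<Rightarrow> real" where
  "omegaA A T = Sup {cmod (ipA A (T x) x) | x. normA A x = 1}"

section \<open>The operator diag(A,A) on H (+) H, written out componentwise\<close>

definition ipAA :: "('a::complex_inner \<Rightarrow> 'a) \<Rightarrow> 'a \<times> 'a \<Rightarrow> 'a \<times> 'a \<Rightarrow> complex" where
  "ipAA A u v = ipA A (fst u) (fst v) + ipA A (snd u) (snd v)"

definition normAA :: "('a::complex_inner \<Rightarrow> 'a) \<Rightarrow> 'a \<times> 'a \<Rightarrow> real" where
  "normAA A u = sqrt (Re (ipAA A u u))"

definition omegaAA :: "('a::complex_inner \<Rightarrow> 'a) \<Rightarrow> ('a \<times> 'a \<Rightarrow> 'a \<times> 'a) \<Rightarrow> real" where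
  "omegaAA A T = Sup {cmod (ipAA A (T u) u) | u. normAA A u = 1}"

definition block :: "('a::complex_inner \<Rightarrow> 'a) \<Rightarrow> ('a \<Rightarrow> 'a) \<Rightarrow> ('a \<Rightarrow> 'a) \<Rightarrow> ('a \<Rightarrow> 'a)
                     \<Rightarrow> 'a \<times> 'a \<Rightarrow> 'a \<times> 'a" where
  "block P Q R S u = (P (fst u) + Q (snd u), R (fst u) + S (snd u))"

end

theory Submission
  imports Defs
begin

text \<open>
  For w = (x1, x2) with normAA A w = 1, the A-inner product of block P Q R S w with w splits as
  (l <P x1, x1> + <Q x2, x1>) + ((1 - l) <P x1, x1> + <R x1, x2>) + <S x2, x2>.
  With x1 = a u, normA A u = 1 and e = (u, 0), the first summand equals <e, w> <w, g> for
  g = (l P# u, Q# u), and the second equals <h, w> <w, e> for h = ((1 - l) P u, R u).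
  Buzano's inequality for the semi-inner product on H (+) H bounds them by
  (|<e, g>| + normAA A g) / 2 and (|<h, e>| + normAA A h) / 2; here normAA A g squared is
  <(l^2 P P# + Q Q#) u, u>, and |<h, e>| is at most both (1 - l) normA A (P u) and
  (1 - l) normA A (P# u), which is enough to compare normAA A h with (1 - l)^2 P P# + R# R.
  The last summand is at most omegaA A S.

  Behind this are two facts about T in B_A(H): the A-adjoint T# exists (the solution of
  A X = T* A in the closure of the range of A is bounded by the uniform boundedness principle),
  and T is A-bounded (Lax's theorem applied to T# T).
\<close>

section \<open>Semi-inner products\<close>

lemma quadratic_nonneg_imp_le:
  fixes p q s :: real
  assumes s: "0 \<le> s" and nonneg: "\<And>t. 0 \<le> p - 2 * t * q + t\<^sup>2 * q * s"
  shows "q \<le> p * s"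
proof (cases "s = 0")
  case True
  show ?thesis
  proof (rule ccontr)
    assume "\<not> q \<le> p * s"
    hence "0 < q" using True by simp
    hence "p - 2 * ((p + 1) / (2 * q)) * q = - 1" by (simp add: field_simps)
    thus False using nonneg[of "(p + 1) / (2 * q)"] True by simp
  qed
next
  case False
  hence "0 < s" using s by simp
  hence "p - 2 * (1 / s) * q + (1 / s)\<^sup>2 * q * s = p - q / s"
    by (simp add: power2_eq_square field_simps)
  hence "q / s \<le> p" using nonneg[of "1 / s"] by simp
  thus ?thesis using \<open>0 < s\<close> by (simp add: field_simps)
qed

locale semi_inner =
  fixes B :: "'v::ab_group_add \<Rightarrow> 'v \<Rightarrow> complex" and sc :: "complex \<Rightarrow> 'v \<Rightarrow> 'v"
  assumes add_left: "B (x + y) z = B x z + B y z"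
    and scale_left: "B (sc c x) y = c * B x y"
    and conj_sym: "B x y = cnj (B y x)"
    and nonneg: "0 \<le> Re (B x x)"
begin

definition snorm :: "'v \<Rightarrow> real" where "snorm x = sqrt (Re (B x x))"

lemma add_right: "B x (y + z) = B x y + B x z"
  by (metis add_left complex_cnj_add conj_sym)

lemma scale_right: "B x (sc c y) = cnj c * B x y"
  by (metis complex_cnj_cnj complex_cnj_mult conj_sym scale_left)

lemma zero_left [simp]: "B 0 y = 0"
  using add_left[of 0 0 y] by simp

lemma zero_right [simp]: "B x 0 = 0"
  using add_right[of x 0 0] by simp

lemma diff_left: "B (x - y) z = B x z - B y z"
  using add_left[of "x - y" y z] by simp

lemma diff_right: "B x (y - z) = B x y - B x z"
  using add_right[of x "y - z" z] by simp

lemma cnj_eq: "cnj (B x y) = B y x"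
  by (metis conj_sym)

lemma self_eq_of_real: "B x x = complex_of_real (Re (B x x))"
  by (metis Reals_cnj_iff complex_is_Real_iff conj_sym of_real_Re)

lemma snorm_nonneg: "0 \<le> snorm x"
  using nonneg[of x] by (simp add: snorm_def)

lemma snorm_square: "(snorm x)\<^sup>2 = Re (B x x)"
  using nonneg[of x] by (simp add: snorm_def)

lemma of_real_snorm_square: "complex_of_real ((snorm x)\<^sup>2) = B x x"
  using snorm_square self_eq_of_real by simp

lemma self_diff_scale:
  "Re (B (x - sc (complex_of_real t * B x y) y) (x - sc (complex_of_real t * B x y) y))
     = Re (B x x) - 2 * t * (cmod (B x y))\<^sup>2 + t\<^sup>2 * (cmod (B x y))\<^sup>2 * Re (B y y)"
proof -
  define b where "b = B x y"
  have yx: "B y x = cnj b" by (simp add: b_def cnj_eq)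
  have bb: "b * cnj b = complex_of_real ((cmod b)\<^sup>2)" "cnj b * b = complex_of_real ((cmod b)\<^sup>2)"
    using complex_norm_square[of b] by (simp_all add: mult.commute)
  have "B (x - sc (complex_of_real t * b) y) (x - sc (complex_of_real t * b) y)
      = B x x - complex_of_real t * (cnj b * b) - complex_of_real t * (b * cnj b)
        + complex_of_real t * complex_of_real t * (b * cnj b) * B y y"
    by (simp add: diff_left diff_right scale_left scale_right yx b_def[symmetric] algebra_simps)
  also have "\<dots> = B x x - complex_of_real (2 * t * (cmod b)\<^sup>2)
        + complex_of_real (t\<^sup>2 * (cmod b)\<^sup>2) * B y y"
    unfolding bb by (simp add: power2_eq_square algebra_simps)
  finally show ?thesis by (simp add: b_def)
qed

lemma Cauchy_Schwarz: "cmod (B x y) \<le> snorm x * snorm y"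
proof -
  have "(cmod (B x y))\<^sup>2 \<le> Re (B x x) * Re (B y y)"
    by (rule quadratic_nonneg_imp_le[OF nonneg])
      (simp only: self_diff_scale[symmetric] nonneg)
  hence "(cmod (B x y))\<^sup>2 \<le> (snorm x * snorm y)\<^sup>2"
    by (simp add: power_mult_distrib snorm_square)
  thus ?thesis by (rule power2_le_imp_le) (simp add: snorm_nonneg)
qed

lemma orthogonal_if_minimal:
  assumes "\<And>t::real. Re (B x x)
      \<le> Re (B (x - sc (complex_of_real t * B x y) y) (x - sc (complex_of_real t * B x y) y))"
  shows "B x y = 0"
proof -
  have "(cmod (B x y))\<^sup>2 \<le> 0 * Re (B y y)"
  proof (rule quadratic_nonneg_imp_le[OF nonneg])
    fix t :: real
    show "0 \<le> 0 - 2 * t * (cmod (B x y))\<^sup>2 + t\<^sup>2 * (cmod (B x y))\<^sup>2 * Re (B y y)"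
      using assms[of t] unfolding self_diff_scale by linarith
  qed
  thus ?thesis by simp
qed

lemma snorm_triangle: "snorm (x + y) \<le> snorm x + snorm y"
proof -
  have "Re (B x y) + Re (B y x) \<le> 2 * (snorm x * snorm y)"
    using Cauchy_Schwarz[of x y] Cauchy_Schwarz[of y x] complex_Re_le_cmod
    by (smt (verit) mult.commute)
  moreover have "Re (B (x + y) (x + y)) = Re (B x x) + Re (B x y) + Re (B y x) + Re (B y y)"
    by (simp add: add_left add_right)
  ultimately have "(snorm (x + y))\<^sup>2 \<le> (snorm x + snorm y)\<^sup>2"
    unfolding power2_sum snorm_square by linarith
  thus ?thesis by (rule power2_le_imp_le) (simp add: snorm_nonneg)
qed

lemma self_scale: "B (sc c x) (sc c x) = complex_of_real ((cmod c)\<^sup>2) * B x x"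
  using complex_norm_square[of c] by (simp add: scale_left scale_right mult.assoc)

lemma snorm_scale: "snorm (sc c x) = cmod c * snorm x"
  by (simp add: snorm_def self_scale real_sqrt_mult)

lemma Buzano:
  assumes e: "snorm e = 1"
  shows "cmod (B x e * B e y) \<le> (snorm x * snorm y + cmod (B x y)) / 2"
proof -
  define v where "v = sc (2 * B y e) e - y"
  have ee: "B e e = 1" using of_real_snorm_square[of e] e by simp
  have "B v v = B y y"
    by (simp add: v_def diff_left diff_right scale_left scale_right ee cnj_eq algebra_simps)
  hence "snorm v = snorm y" by (simp add: snorm_def)
  have "2 * (B x e * B e y) = B x y + B x v"
    by (simp add: v_def diff_right scale_right cnj_eq algebra_simps)
  hence "2 * cmod (B x e * B e y) \<le> cmod (B x y) + cmod (B x v)"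
    by (metis norm_mult norm_numeral norm_triangle_ineq of_real_numeral)
  also have "cmod (B x v) \<le> snorm x * snorm y"
    using Cauchy_Schwarz[of x v] \<open>snorm v = snorm y\<close> by simp
  finally show ?thesis by simp
qed

end

section \<open>Complex inner product spaces and Hilbert spaces\<close>

interpretation cinner: semi_inner "cinner :: 'a::complex_inner \<Rightarrow> 'a \<Rightarrow> complex" scaleC
  rewrites "semi_inner.snorm (cinner :: 'a \<Rightarrow> 'a \<Rightarrow> complex) = norm"
proof -
  show "semi_inner (cinner :: 'a \<Rightarrow> 'a \<Rightarrow> complex) scaleC"
    by unfold_locales (auto simp: cinner_add_left cinner_scaleC_left cinner_ge_zero intro: cinner_commute)
  then show "semi_inner.snorm (cinner :: 'a \<Rightarrow> 'a \<Rightarrow> complex) = norm"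
    by (simp add: semi_inner.snorm_def norm_eq_sqrt_cinner fun_eq_iff)
qed

lemma cinner_scaleR_left: "cinner (r *\<^sub>R x) y = complex_of_real r * cinner x (y::'a::complex_inner)"
  by (simp add: scaleR_scaleC cinner_scaleC_left)

lemma cinner_scaleR_right: "cinner x (r *\<^sub>R y) = complex_of_real r * cinner x (y::'a::complex_inner)"
  by (simp add: scaleR_scaleC cinner.scale_right)

lemma bounded_bilinear_cinner: "bounded_bilinear (cinner :: 'a::complex_inner \<Rightarrow> 'a \<Rightarrow> complex)"
proof
  fix a a' b b' :: 'a and r :: real
  show "cinner (a + a') b = cinner a b + cinner a' b" by (rule cinner_add_left)
  show "cinner a (b + b') = cinner a b + cinner a b'" by (rule cinner.add_right)
  show "cinner (r *\<^sub>R a) b = r *\<^sub>R cinner a b" by (simp add: cinner_scaleR_left scaleR_conv_of_real)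
  show "cinner a (r *\<^sub>R b) = r *\<^sub>R cinner a b" by (simp add: cinner_scaleR_right scaleR_conv_of_real)
  show "\<exists>K. \<forall>a b::'a. norm (cinner a b) \<le> norm a * norm b * K"
    by (intro exI[of _ 1] allI) (simp add: cinner.Cauchy_Schwarz)
qed

lemma continuous_on_cinner_left: "continuous_on S (\<lambda>w::'a::complex_inner. cinner w z)"
  by (intro linear_continuous_on bounded_bilinear.bounded_linear_left[OF bounded_bilinear_cinner])

lemma continuous_on_cinner_right: "continuous_on S (\<lambda>w::'a::complex_inner. cinner z w)"
  by (intro linear_continuous_on bounded_bilinear.bounded_linear_right[OF bounded_bilinear_cinner])

lemma cinner_right_eqI: "(\<And>z. cinner z x = cinner z y) \<Longrightarrow> x = (y::'a::complex_inner)"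
  by (metis cinner.diff_right cinner_eq_zero_iff eq_iff_diff_eq_0)

lemma parallelogram_law:
  "(norm (x + y))\<^sup>2 + (norm (x - y))\<^sup>2 = 2 * (norm x)\<^sup>2 + 2 * (norm (y::'a::complex_inner))\<^sup>2"
  unfolding cinner.snorm_square
  by (simp add: cinner_add_left cinner.add_right cinner.diff_left cinner.diff_right)

lemma parallelogram_midpoint:
  fixes y a b :: "'a::complex_inner"
  shows "(dist a b)\<^sup>2 = 2 * (norm (y - a))\<^sup>2 + 2 * (norm (y - b))\<^sup>2
    - 4 * (norm (y - ((1/2) *\<^sub>R a + (1/2) *\<^sub>R b)))\<^sup>2"
proof -
  have "(y - a) + (y - b) = 2 *\<^sub>R (y - ((1/2) *\<^sub>R a + (1/2) *\<^sub>R b))"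
    by (simp add: algebra_simps scaleR_2)
  hence "(norm ((y - a) + (y - b)))\<^sup>2 = 4 * (norm (y - ((1/2) *\<^sub>R a + (1/2) *\<^sub>R b)))\<^sup>2"
    by (simp add: power2_eq_square)
  moreover have "(y - a) - (y - b) = b - a" by simp
  ultimately show ?thesis
    using parallelogram_law[of "y - a" "y - b"] by (simp add: dist_norm norm_minus_commute)
qed

lemma bounded_clinear_add: "bounded_clinear T \<Longrightarrow> T (x + y) = T x + T y"
  by (simp add: bounded_clinear_def)

lemma bounded_clinear_scaleC: "bounded_clinear T \<Longrightarrow> T (scaleC c x) = scaleC c (T x)"
  by (simp add: bounded_clinear_def)

lemma bounded_clinear_imp_bounded_linear: "bounded_clinear T \<Longrightarrow> bounded_linear T"
  unfolding bounded_clinear_def by (auto intro!: bounded_linear_intro simp: scaleR_scaleC)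

lemma bounded_clinear_bound: "bounded_clinear T \<Longrightarrow> \<exists>K\<ge>0. \<forall>x. norm (T x) \<le> K * norm x"
  by (metis bounded_clinear_imp_bounded_linear bounded_linear.nonneg_bounded mult.commute)

lemma bounded_clinear_scaleC_const: "bounded_clinear (scaleC c :: 'a::complex_inner \<Rightarrow> 'a)"
  unfolding bounded_clinear_def
  by (auto simp: scaleC_add_right scaleC_scaleC mult.commute cinner.snorm_scale intro: exI[of _ "cmod c"])

definition csubspace :: "'a::complex_vector set \<Rightarrow> bool" where
  "csubspace M \<longleftrightarrow>
     0 \<in> M \<and> (\<forall>x\<in>M. \<forall>y\<in>M. x + y \<in> M) \<and> (\<forall>c. \<forall>x\<in>M. scaleC c x \<in> M)"

lemma csubspace_imp_convex: "csubspace M \<Longrightarrow> convex M"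
  unfolding csubspace_def convex_def by (simp add: scaleR_scaleC)

lemma csubspace_diff: "csubspace M \<Longrightarrow> x \<in> M \<Longrightarrow> y \<in> M \<Longrightarrow> x - y \<in> M"
  unfolding csubspace_def
  by (metis diff_conv_add_uminus of_real_1 of_real_minus scaleR_minus1_left scaleR_scaleC)

lemma csubspace_range:
  assumes "bounded_clinear T"
  shows "csubspace (range T)"
proof -
  have "T 0 = 0"
    using bounded_clinear_imp_bounded_linear[OF assms] by (simp add: linear_simps)
  moreover have "T x + T y = T (x + y)" "scaleC c (T x) = T (scaleC c x)" for x y c
    using assms by (simp_all add: bounded_clinear_add bounded_clinear_scaleC)
  ultimately show ?thesis
    unfolding csubspace_def by (auto intro!: range_eqI)
qed

lemma csubspace_closure:
  fixes M :: "'a::complex_inner set"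
  assumes "csubspace M"
  shows "csubspace (closure M)"
proof -
  have "(\<lambda>(x, y). x + y) ` closure (M \<times> M) \<subseteq> closure M"
  proof (rule image_closure_subset)
    show "(\<lambda>(x, y). x + y) ` (M \<times> M) \<subseteq> closure M"
      using assms unfolding csubspace_def by (auto intro: closure_subset[THEN subsetD])
  qed (auto intro!: continuous_intros simp: split_def)
  hence "x + y \<in> closure M" if "x \<in> closure M" "y \<in> closure M" for x y
    using that by (auto simp: closure_Times)
  moreover have "scaleC c ` closure M \<subseteq> closure M" for c
  proof (rule image_closure_subset)
    show "scaleC c ` M \<subseteq> closure M"
      using assms unfolding csubspace_def by (auto intro: closure_subset[THEN subsetD])
  qed (auto intro!: linear_continuous_on bounded_clinear_imp_bounded_linear bounded_clinear_scaleC_const)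
  ultimately show ?thesis
    using assms unfolding csubspace_def image_subset_iff by (auto intro: closure_subset[THEN subsetD])
qed

lemma Cauchy_if_dist_square_le:
  fixes f :: "nat \<Rightarrow> 'a::metric_space"
  assumes bound: "\<And>m n. (dist (f m) (f n))\<^sup>2 \<le> e m + e n" and lim: "e \<longlonglongrightarrow> 0"
  shows "Cauchy f"
proof (rule metric_CauchyI)
  fix \<epsilon> :: real
  assume "0 < \<epsilon>"
  then obtain N where N: "\<And>n. N \<le> n \<Longrightarrow> e n < \<epsilon>\<^sup>2 / 2"
    using order_tendstoD(2)[OF lim, of "\<epsilon>\<^sup>2 / 2"] by (auto simp: eventually_sequentially)
  have "dist (f m) (f n) < \<epsilon>" if "N \<le> m" "N \<le> n" for m n
  proof (rule power_less_imp_less_base)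
    show "(dist (f m) (f n))\<^sup>2 < \<epsilon>\<^sup>2" using bound[of m n] N[OF that(1)] N[OF that(2)] by linarith
  qed (use \<open>0 < \<epsilon>\<close> in simp)
  thus "\<exists>N. \<forall>m\<ge>N. \<forall>n\<ge>N. dist (f m) (f n) < \<epsilon>" by blast
qed

lemma nearest_point_exists:
  fixes M :: "'a::chilbert_space set"
  assumes closed: "closed M" and convex: "convex M" and nonempty: "M \<noteq> {}"
  shows "\<exists>m\<in>M. \<forall>w\<in>M. norm (y - m) \<le> norm (y - w)"
proof -
  define D where "D = (INF w\<in>M. (norm (y - w))\<^sup>2)"
  have bdd: "bdd_below ((\<lambda>w. (norm (y - w))\<^sup>2) ` M)" by (rule bdd_belowI[of _ 0]) auto
  have D_le: "D \<le> (norm (y - w))\<^sup>2" if "w \<in> M" for w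
    unfolding D_def using bdd that by (rule cINF_lower)
  have "\<exists>w\<in>M. (norm (y - w))\<^sup>2 < D + 1 / real (Suc n)" for n
  proof -
    have "D < D + 1 / real (Suc n)" by simp
    thus ?thesis using cINF_less_iff[OF nonempty bdd] by (simp only: D_def)
  qed
  then obtain f where f_in: "\<And>n. f n \<in> M"
    and f_near: "\<And>n. (norm (y - f n))\<^sup>2 < D + 1 / real (Suc n)" by metis
  have "Cauchy f"
  proof (rule Cauchy_if_dist_square_le)
    fix m n
    have "(1/2) *\<^sub>R f m + (1/2) *\<^sub>R f n \<in> M" using convexD[OF convex f_in f_in] by simp
    thus "(dist (f m) (f n))\<^sup>2 \<le> 2 / real (Suc m) + 2 / real (Suc n)"
      using D_le f_near[of m] f_near[of n] parallelogram_midpoint[of "f m" "f n" y] by fastforce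
  qed (intro LIMSEQ_Suc lim_const_over_n)
  then obtain m where lim: "f \<longlonglongrightarrow> m" using Cauchy_convergent_iff convergent_def by blast
  have "m \<in> M" using closed_sequentially[OF closed] f_in lim by blast
  have "(\<lambda>n. (norm (y - f n))\<^sup>2) \<longlonglongrightarrow> (norm (y - m))\<^sup>2" by (intro tendsto_intros lim)
  moreover have "(\<lambda>n. D + 1 / real (Suc n)) \<longlonglongrightarrow> D + 0" by (intro tendsto_intros LIMSEQ_Suc)
  ultimately have "(norm (y - m))\<^sup>2 \<le> D"
    using f_near by (intro LIMSEQ_le) (auto intro: less_imp_le)
  hence "norm (y - m) \<le> norm (y - w)" if "w \<in> M" for w
    using D_le[OF that] by (simp add: power2_le_imp_le)
  with \<open>m \<in> M\<close> show ?thesis by blast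
qed

lemma projection_theorem:
  fixes M :: "'a::chilbert_space set"
  assumes "closed M" and "csubspace M"
  shows "\<exists>m\<in>M. \<forall>w\<in>M. cinner (y - m) w = 0"
proof -
  obtain m where "m \<in> M" and nearest: "\<And>w. w \<in> M \<Longrightarrow> norm (y - m) \<le> norm (y - w)"
    using nearest_point_exists[OF assms(1) csubspace_imp_convex[OF assms(2)]] assms(2)
    unfolding csubspace_def by blast
  have "cinner (y - m) w = 0" if "w \<in> M" for w
  proof (rule cinner.orthogonal_if_minimal)
    fix t :: real
    let ?v = "scaleC (complex_of_real t * cinner (y - m) w) w"
    have "m + ?v \<in> M" using assms(2) \<open>m \<in> M\<close> that by (simp add: csubspace_def)
    hence "norm (y - m) \<le> norm (y - m - ?v)" using nearest by (simp add: diff_diff_eq)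
    thus "Re (cinner (y - m) (y - m)) \<le> Re (cinner (y - m - ?v) (y - m - ?v))"
      by (simp add: cinner.snorm_square[symmetric] power_mono)
  qed
  with \<open>m \<in> M\<close> show ?thesis by blast
qed

lemma riesz_representation:
  fixes f :: "'a::chilbert_space \<Rightarrow> complex"
  assumes add: "\<And>x y. f (x + y) = f x + f y" and scale: "\<And>c x. f (scaleC c x) = c * f x"
    and bound: "\<And>x. cmod (f x) \<le> K * norm x"
  shows "\<exists>w. \<forall>x. f x = cinner x w"
proof (cases "\<forall>x. f x = 0")
  case True
  then show ?thesis by (intro exI[of _ 0]) simp
next
  case False
  then obtain x0 where "f x0 \<noteq> 0" by blast
  have "bounded_linear f"
    by (rule bounded_linear_intro[of _ K])
      (auto simp: add scale scaleR_scaleC scaleR_conv_of_real bound mult.commute)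
  hence f0: "f 0 = 0" and f_diff: "\<And>x y. f (x - y) = f x - f y" by (simp_all add: linear_simps)
  define M where "M = {x. f x = 0}"
  have "closed M"
    unfolding M_def by (intro closed_Collect_eq continuous_on_const linear_continuous_on \<open>bounded_linear f\<close>)
  moreover have "csubspace M" by (simp add: csubspace_def M_def f0 add scale)
  ultimately obtain m where "m \<in> M" and orth: "\<And>w. w \<in> M \<Longrightarrow> cinner (x0 - m) w = 0"
    using projection_theorem by blast
  define p where "p = x0 - m"
  have "f p = f x0" using \<open>m \<in> M\<close> by (simp add: p_def f_diff M_def)
  hence "p \<noteq> 0" using \<open>f x0 \<noteq> 0\<close> f0 by auto
  hence pp: "cinner p p \<noteq> 0" by (simp add: cinner_eq_zero_iff)
  have "f x = cinner x (scaleC (cnj (f p / cinner p p)) p)" for x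
  proof -
    define c where "c = f x / f p"
    have "x - scaleC c p \<in> M" using \<open>f p = f x0\<close> \<open>f x0 \<noteq> 0\<close> by (simp add: M_def f_diff scale c_def)
    hence "cinner p (x - scaleC c p) = 0" using orth by (simp add: p_def)
    hence "cinner p x = cnj c * cinner p p" by (simp add: cinner.diff_right cinner.scale_right)
    hence "cinner x p = c * cinner p p" by (metis cinner.cnj_eq complex_cnj_cnj complex_cnj_mult)
    thus ?thesis using pp \<open>f p = f x0\<close> \<open>f x0 \<noteq> 0\<close> by (simp add: cinner.scale_right c_def field_simps)
  qed
  thus ?thesis by blast
qed

lemma adj_exists:
  assumes "bounded_clinear (T::'a::chilbert_space \<Rightarrow> 'a)"
  shows "\<exists>S. \<forall>x y. cinner (T x) y = cinner x (S y)"
proof -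
  obtain K where K: "K \<ge> 0" "\<And>x. norm (T x) \<le> K * norm x" using bounded_clinear_bound[OF assms] by blast
  have "\<exists>w. \<forall>x. cinner (T x) y = cinner x w" for y
  proof (rule riesz_representation[where K = "K * norm y"])
    fix x
    have "cmod (cinner (T x) y) \<le> norm (T x) * norm y" by (rule cinner.Cauchy_Schwarz)
    also have "\<dots> \<le> K * norm x * norm y" using K by (simp add: mult_right_mono)
    finally show "cmod (cinner (T x) y) \<le> K * norm y * norm x" by (simp add: ac_simps)
  qed (simp_all add: assms bounded_clinear_add bounded_clinear_scaleC cinner_add_left cinner_scaleC_left)
  thus ?thesis by metis
qed

lemma cinner_adj_right:
  assumes "bounded_clinear (T::'a::chilbert_space \<Rightarrow> 'a)"
  shows "cinner (T x) y = cinner x (adj T y)"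
proof -
  obtain S where S: "\<forall>x y. cinner (T x) y = cinner x (S y)" using adj_exists[OF assms] by blast
  have "S' = S" if "\<forall>x y. cinner (T x) y = cinner x (S' y)" for S'
    using that S by (intro ext cinner_right_eqI) metis
  with S have "\<exists>!S. \<forall>x y. cinner (T x) y = cinner x (S y)" by blast
  from theI'[OF this] show ?thesis unfolding adj_def by blast
qed

lemma cinner_adj_left:
  "bounded_clinear (T::'a::chilbert_space \<Rightarrow> 'a) \<Longrightarrow> cinner (adj T y) x = cinner y (T x)"
  by (metis cinner_adj_right cinner.cnj_eq)

lemma adj_add:
  "bounded_clinear (T::'a::chilbert_space \<Rightarrow> 'a) \<Longrightarrow> adj T (y + z) = adj T y + adj T z"
  by (rule cinner_right_eqI) (simp add: cinner_adj_right[symmetric] cinner.add_right)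

lemma adj_scaleC:
  "bounded_clinear (T::'a::chilbert_space \<Rightarrow> 'a) \<Longrightarrow> adj T (scaleC c y) = scaleC c (adj T y)"
  by (rule cinner_right_eqI) (simp add: cinner_adj_right[symmetric] cinner.scale_right)

lemma linear_bound_from_ball:
  fixes f :: "'a::real_normed_vector \<Rightarrow> 'b::real_normed_vector"
  assumes "linear f" and "0 < r" and ball: "\<And>y. y \<in> ball x0 r \<Longrightarrow> norm (f y) \<le> n"
  shows "norm (f x) \<le> 4 * n / r * norm x"
proof (cases "x = 0")
  case True
  then show ?thesis using \<open>linear f\<close> by (simp add: linear_0)
next
  case False
  define t where "t = r / (2 * norm x)"
  have "0 < t" using False \<open>0 < r\<close> by (simp add: t_def)
  have "dist x0 (x0 + t *\<^sub>R x) < r" using False \<open>0 < r\<close> by (simp add: dist_norm t_def)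
  hence "norm (f (x0 + t *\<^sub>R x)) \<le> n" and "norm (f x0) \<le> n"
    using ball \<open>0 < r\<close> by auto
  moreover have "f (x0 + t *\<^sub>R x) - f x0 = t *\<^sub>R f x"
    using \<open>linear f\<close> by (simp add: linear_add linear_scale)
  ultimately have "t * norm (f x) \<le> 2 * n"
    using \<open>0 < t\<close> norm_triangle_ineq4[of "f (x0 + t *\<^sub>R x)" "f x0"] by simp
  thus ?thesis using False \<open>0 < r\<close> by (simp add: t_def field_simps)
qed

theorem uniform_boundedness:
  fixes F :: "('a::{real_normed_vector,complete_space} \<Rightarrow> 'b::real_normed_vector) set"
  assumes bl: "\<And>f. f \<in> F \<Longrightarrow> bounded_linear f"
    and pointwise: "\<And>x. \<exists>B. \<forall>f\<in>F. norm (f x) \<le> B"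
  shows "\<exists>C. \<forall>f\<in>F. \<forall>x. norm (f x) \<le> C * norm x"
proof -
  define E where "E n = (\<Inter>f\<in>F. {x. norm (f x) \<le> real n})" for n :: nat
  have "closed (E n)" for n
    unfolding E_def
    by (intro closed_INT ballI closed_Collect_le continuous_on_const continuous_on_norm
        linear_continuous_on bl)
  moreover have "\<Union> (range E) = UNIV"
  proof (intro set_eqI iffI UNIV_I)
    fix x
    obtain B where "\<forall>f\<in>F. norm (f x) \<le> B" using pointwise by blast
    moreover obtain n :: nat where "B \<le> real n" using real_arch_simple by blast
    ultimately have "x \<in> E n" unfolding E_def by force
    thus "x \<in> \<Union> (range E)" by blast
  qed
  ultimately have "\<exists>n. interior (E n) \<noteq> {}"
    using Met_TC.metric_Baire_category_alt[of "range E"] by (force simp: complete_UNIV)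
  then obtain n x0 r where "0 < r" "ball x0 r \<subseteq> E n" by (meson ex_in_conv mem_interior)
  have "norm (f x) \<le> 4 * real n / r * norm x" if "f \<in> F" for f x
  proof (rule linear_bound_from_ball[OF bounded_linear.linear[OF bl[OF that]] \<open>0 < r\<close>])
    show "norm (f y) \<le> real n" if "y \<in> ball x0 r" for y
      using \<open>ball x0 r \<subseteq> E n\<close> \<open>f \<in> F\<close> that unfolding E_def by blast
  qed
  thus ?thesis by blast
qed

lemma norm_le_if_cinner_le_on_closure:
  fixes y :: "'a::complex_inner"
  assumes "y \<in> closure M" and "0 \<le> K"
    and bound: "\<And>v. v \<in> M \<Longrightarrow> cmod (cinner y v) \<le> K * norm v"
  shows "norm y \<le> K"
proof -
  have "closed {v. cmod (cinner y v) \<le> K * norm v}"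
    by (intro closed_Collect_le continuous_intros continuous_on_cinner_right)
  with bound have "closure M \<subseteq> {v. cmod (cinner y v) \<le> K * norm v}"
    by (intro closure_minimal) auto
  with assms(1) have "norm y * norm y \<le> K * norm y"
    by (metis (mono_tags, lifting) cinner.of_real_snorm_square mem_Collect_eq norm_of_real abs_power2
        power2_eq_square subsetD)
  thus ?thesis using \<open>0 \<le> K\<close> by (cases "y = 0") simp_all
qed

lemma bounded_if_weakly_bounded:
  fixes X :: "'a::chilbert_space \<Rightarrow> 'b::complex_inner"
  assumes lin: "linear X" and range: "range X \<subseteq> closure M"
    and scale: "\<And>r v. v \<in> M \<Longrightarrow> r *\<^sub>R v \<in> M"
    and weak: "\<And>v. v \<in> M \<Longrightarrow> \<exists>K. \<forall>x. cmod (cinner (X x) v) \<le> K * norm x"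
  shows "\<exists>C. \<forall>x. norm (X x) \<le> C * norm x"
proof -
  define F where "F = (\<lambda>v x. cinner (X x) v) ` (M \<inter> {v. norm v \<le> 1})"
  have "\<exists>C. \<forall>f\<in>F. \<forall>x. norm (f x) \<le> C * norm x"
  proof (rule uniform_boundedness)
    fix f assume "f \<in> F"
    then obtain v where f: "f = (\<lambda>x. cinner (X x) v)" and "v \<in> M" unfolding F_def by blast
    then obtain K where "\<forall>x. cmod (cinner (X x) v) \<le> K * norm x" using weak by blast
    then show "bounded_linear f"
      unfolding f using lin
      by (intro bounded_linear_intro[of _ K])
        (auto simp: linear_add linear_scale cinner_add_left cinner_scaleR_left scaleR_conv_of_real
          mult.commute)
  next
    fix x
    have "cmod (cinner (X x) v) \<le> norm (X x)" if "norm v \<le> 1" for v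
      using cinner.Cauchy_Schwarz[of "X x" v] mult_left_le[OF that norm_ge_zero[of "X x"]] by linarith
    then show "\<exists>B. \<forall>f\<in>F. norm (f x) \<le> B" unfolding F_def by blast
  qed
  then obtain C0
    where C0: "\<And>v x. v \<in> M \<Longrightarrow> norm v \<le> 1 \<Longrightarrow> cmod (cinner (X x) v) \<le> C0 * norm x"
    unfolding F_def by auto
  define C where "C = max C0 0"
  have "cmod (cinner (X x) v) \<le> C * norm x * norm v" if "v \<in> M" for x v
  proof (cases "v = 0")
    case False
    have "cmod (cinner (X x) ((1 / norm v) *\<^sub>R v)) \<le> C0 * norm x"
      using False that by (intro C0 scale) simp_all
    also have "\<dots> \<le> C * norm x" by (simp add: C_def mult_right_mono)
    finally show ?thesis using False by (simp add: cinner_scaleR_right norm_divide field_simps)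
  qed simp
  hence "norm (X x) \<le> C * norm x" for x
    using range by (intro norm_le_if_cinner_le_on_closure) (auto simp: C_def)
  thus ?thesis by blast
qed

section \<open>Positive operators and the A-adjoint\<close>

lemma positive_op_selfadjoint:
  assumes "positive_op (A::'a::complex_inner \<Rightarrow> 'a)"
  shows "cinner (A x) y = cinner x (A y)"
proof -
  have A: "bounded_clinear A" using assms by (simp add: positive_op_def)
  have real: "Im (cinner (A v) v) = 0" for v using assms by (simp add: positive_op_def)
  define s where "s u v = cinner (A u) v" for u v
  have expand: "s (u + v) (u + v) = s u u + s u v + s v u + s v v" for u v
    by (simp add: s_def bounded_clinear_add[OF A] cinner_add_left cinner.add_right)
  have "Im (s x y + s y x) = 0"
    using real[of "x + y"] real[of x] real[of y] expand[of x y] by (simp add: s_def)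
  moreover have "Im (- \<i> * s x y + \<i> * s y x) = 0"
    using real[of "x + scaleC \<i> y"] real[of x] real[of y] expand[of x "scaleC \<i> y"]
    by (simp add: s_def bounded_clinear_scaleC[OF A] cinner_scaleC_left cinner.scale_right)
  ultimately have "cnj (s y x) = s x y" by (simp add: complex_eq_iff)
  thus ?thesis by (simp add: s_def cinner.cnj_eq)
qed

locale positive_operator =
  fixes A :: "'a::chilbert_space \<Rightarrow> 'a"
  assumes positive: "positive_op A"
begin

lemma bounded_clinear_A: "bounded_clinear A"
  using positive by (simp add: positive_op_def)

lemma selfadjoint: "cinner (A x) y = cinner x (A y)"
  by (rule positive_op_selfadjoint[OF positive])

sublocale A: semi_inner "ipA A" scaleC
  rewrites "semi_inner.snorm (ipA A) = normA A"
proof -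
  show "semi_inner (ipA A) scaleC"
  proof
    fix x y z :: 'a and c
    show "ipA A (x + y) z = ipA A x z + ipA A y z"
      by (simp add: ipA_def bounded_clinear_add[OF bounded_clinear_A] cinner_add_left)
    show "ipA A (scaleC c x) y = c * ipA A x y"
      by (simp add: ipA_def bounded_clinear_scaleC[OF bounded_clinear_A] cinner_scaleC_left)
    show "ipA A x y = cnj (ipA A y x)" by (simp add: ipA_def selfadjoint cinner.cnj_eq)
    show "0 \<le> Re (ipA A x x)" using positive by (simp add: ipA_def positive_op_def)
  qed
  then show "semi_inner.snorm (ipA A) = normA A"
    by (simp add: semi_inner.snorm_def normA_def fun_eq_iff)
qed

sublocale AA: semi_inner "ipAA A" "\<lambda>c w. (scaleC c (fst w), scaleC c (snd w))"
  rewrites "semi_inner.snorm (ipAA A) = normAA A"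
proof -
  show "semi_inner (ipAA A) (\<lambda>c w. (scaleC c (fst w), scaleC c (snd w)))"
    by unfold_locales
      (auto simp: ipAA_def A.add_left A.scale_left A.cnj_eq distrib_left intro: add_nonneg_nonneg A.nonneg)
  then show "semi_inner.snorm (ipAA A) = normAA A"
    by (simp add: semi_inner.snorm_def normAA_def fun_eq_iff)
qed

lemma csubspace_closure_range: "csubspace (closure (range A))"
  by (intro csubspace_closure csubspace_range bounded_clinear_A)

lemma kernel_orthogonal_closure_range:
  assumes "A z = 0" and "w \<in> closure (range A)"
  shows "cinner w z = 0"
proof -
  have "closure (range A) \<subseteq> {w. cinner w z = 0}"
    using assms(1) by (intro closure_minimal closed_Collect_eq continuous_on_cinner_left continuous_on_const)
      (auto simp: selfadjoint)
  with assms(2) show ?thesis by blast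
qed

lemma inj_on_closure_range: "inj_on A (closure (range A))"
proof (rule inj_onI)
  fix m m' assume m: "m \<in> closure (range A)" and m': "m' \<in> closure (range A)" and "A m = A m'"
  hence "A (m - m') = 0"
    using bounded_clinear_imp_bounded_linear[OF bounded_clinear_A] by (simp add: linear_simps)
  moreover have "m - m' \<in> closure (range A)" by (rule csubspace_diff[OF csubspace_closure_range m m'])
  ultimately have "cinner (m - m') (m - m') = 0" by (rule kernel_orthogonal_closure_range)
  thus "m = m'" by (simp add: cinner_eq_zero_iff)
qed

lemma range_subset_image_closure_range: "range A \<subseteq> A ` closure (range A)"
proof
  fix y assume "y \<in> range A"
  then obtain y0 where "y = A y0" by blast
  obtain m where "m \<in> closure (range A)"
    and orth: "\<And>w. w \<in> closure (range A) \<Longrightarrow> cinner (y0 - m) w = 0"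
    using projection_theorem[OF closed_closure csubspace_closure_range] by blast
  have "cinner (A (y0 - m)) z = 0" for z
    using orth[OF closure_subset[THEN subsetD, OF rangeI]] by (simp add: selfadjoint)
  hence "A (y0 - m) = 0" by (metis cinner_eq_zero_iff)
  hence "A m = y"
    using \<open>y = A y0\<close> bounded_clinear_imp_bounded_linear[OF bounded_clinear_A] by (simp add: linear_simps)
  with \<open>m \<in> closure (range A)\<close> show "y \<in> A ` closure (range A)" by blast
qed

lemma sharpA_exists:
  assumes "T \<in> BA A"
  shows "\<exists>X. bounded_clinear X \<and> (\<forall>x. A (X x) = adj T (A x)) \<and> range X \<subseteq> closure (range A)"
proof -
  have T: "bounded_clinear T" using assms by (simp add: BA_def)
  have "adj T (A x) \<in> range A" for x
    using assms unfolding BA_def by (auto simp: image_subset_iff)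
  hence "\<forall>x. \<exists>m. m \<in> closure (range A) \<and> A m = adj T (A x)"
    using range_subset_image_closure_range by (metis imageE subsetD)
  then obtain X where X_in: "\<And>x. X x \<in> closure (range A)" and AX: "\<And>x. A (X x) = adj T (A x)"
    by (metis choice)
  note eqI = inj_onD[OF inj_on_closure_range]
  note subspace = csubspace_closure_range[unfolded csubspace_def]
  have add: "X (x + y) = X x + X y" for x y
    by (rule eqI) (simp_all add: X_in subspace AX adj_add[OF T] bounded_clinear_add[OF bounded_clinear_A])
  have scale: "X (scaleC c x) = scaleC c (X x)" for c x
    by (rule eqI) (simp_all add: X_in subspace AX adj_scaleC[OF T] bounded_clinear_scaleC[OF bounded_clinear_A])
  have "\<exists>C. \<forall>x. norm (X x) \<le> C * norm x"
  proof (rule bounded_if_weakly_bounded[where M = "range A"])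
    show "linear X" by (rule linearI) (simp_all add: add scale scaleR_scaleC)
    show "range X \<subseteq> closure (range A)" using X_in by blast
    show "r *\<^sub>R v \<in> range A" if "v \<in> range A" for r v
      using that csubspace_range[OF bounded_clinear_A] unfolding csubspace_def scaleR_scaleC by blast
    show "\<exists>K. \<forall>x. cmod (cinner (X x) v) \<le> K * norm x" if "v \<in> range A" for v
    proof -
      obtain z where "v = A z" using \<open>v \<in> range A\<close> by blast
      have "cinner (X x) (A z) = cinner x (A (T z))" for x
        by (simp add: selfadjoint[symmetric] AX cinner_adj_left[OF T])
      thus ?thesis using cinner.Cauchy_Schwarz \<open>v = A z\<close> by (metis mult.commute)
    qed
  qed
  hence "bounded_clinear X" unfolding bounded_clinear_def by (metis add scale mult.commute)
  thus ?thesis using X_in AX by blast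
qed

lemma sharpA_spec:
  assumes "T \<in> BA A"
  shows "bounded_clinear (sharpA A T)" and "A (sharpA A T x) = adj T (A x)"
proof -
  let ?P = "\<lambda>X. bounded_clinear X \<and> (\<forall>x. A (X x) = adj T (A x)) \<and> range X \<subseteq> closure (range A)"
  obtain X where "?P X" using sharpA_exists[OF assms] by blast
  moreover have "X' = X" if "?P X'" for X'
  proof
    fix x
    have "X' x \<in> closure (range A)" "X x \<in> closure (range A)"
      using that \<open>?P X\<close> by (simp_all add: image_subset_iff)
    moreover have "A (X' x) = A (X x)" using that \<open>?P X\<close> by simp
    ultimately show "X' x = X x" using inj_on_closure_range by (simp add: inj_on_eq_iff)
  qed
  ultimately have "?P (sharpA A T)" unfolding sharpA_def by (rule theI)
  thus "bounded_clinear (sharpA A T)" "A (sharpA A T x) = adj T (A x)" by auto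
qed

lemma ipA_sharpA_right:
  assumes "T \<in> BA A"
  shows "ipA A (T x) y = ipA A x (sharpA A T y)"
  using assms by (simp add: ipA_def selfadjoint sharpA_spec(2) cinner_adj_right BA_def)

lemma ipA_sharpA_left:
  assumes "T \<in> BA A"
  shows "ipA A (sharpA A T x) y = ipA A x (T y)"
  by (metis A.cnj_eq assms ipA_sharpA_right)

end

section \<open>A-bounded operators\<close>

lemma doubling_sequence_bound:
  fixes k :: "nat \<Rightarrow> real"
  assumes "0 \<le> c" and "0 \<le> K"
    and step: "\<And>n. (k n)\<^sup>2 \<le> k (Suc n) * c" and growth: "\<And>n. k n \<le> L * K ^ 2 ^ n"
  shows "k 0 \<le> K * c"
proof (rule ccontr)
  assume "\<not> k 0 \<le> K * c"
  hence big: "K * c < k 0" by simp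
  have "c \<noteq> 0" using step[of 0] big by auto
  moreover have "K \<noteq> 0" using growth[of 0] big by auto
  ultimately have "0 < c" "0 < K" using assms by auto
  define r where "r = k 0 / (K * c)"
  have "1 < r" using big \<open>0 < c\<close> \<open>0 < K\<close> by (simp add: r_def)
  have lower: "(r * K) ^ 2 ^ n * c \<le> k n" for n
  proof (induction n)
    case 0
    show ?case using \<open>0 < c\<close> \<open>0 < K\<close> by (simp add: r_def)
  next
    case (Suc n)
    have "((r * K) ^ 2 ^ n * c)\<^sup>2 \<le> (k n)\<^sup>2"
      using Suc.IH \<open>1 < r\<close> \<open>0 < K\<close> \<open>0 < c\<close> by (intro power_mono) auto
    also have "\<dots> \<le> k (Suc n) * c" by (rule step)
    also have "((r * K) ^ 2 ^ n * c)\<^sup>2 = ((r * K) ^ 2 ^ Suc n * c) * c"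
      by (simp add: power2_eq_square power_add[symmetric] mult_2[symmetric] mult_ac)
    finally show ?case using \<open>0 < c\<close> by simp
  qed
  obtain n where "L / c < r ^ n" using real_arch_pow[OF \<open>1 < r\<close>] by blast
  also have "r ^ n \<le> r ^ 2 ^ n"
    using \<open>1 < r\<close> by (intro power_increasing) (auto intro: less_imp_le less_exp)
  also have "r ^ 2 ^ n \<le> L / c"
  proof -
    have "K ^ 2 ^ n * (c * r ^ 2 ^ n) \<le> K ^ 2 ^ n * L"
      using lower[of n] growth[of n] by (simp add: power_mult_distrib mult_ac)
    hence "c * r ^ 2 ^ n \<le> L" using \<open>0 < K\<close> by (simp add: mult_le_cancel_left_pos)
    thus ?thesis using \<open>0 < c\<close> by (simp add: field_simps)
  qed
  finally show False by simp
qed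

definition BAhalf :: "('a::complex_inner \<Rightarrow> 'a) \<Rightarrow> ('a \<Rightarrow> 'a) set" where
  "BAhalf A = {T. \<exists>c>0. \<forall>x. normA A (T x) \<le> c * normA A x}"

context positive_operator
begin

lemma normA_le_norm: "\<exists>K\<ge>0. \<forall>y. normA A y \<le> K * norm y"
proof -
  obtain K where "K \<ge> 0" and K: "\<And>x. norm (A x) \<le> K * norm x"
    using bounded_clinear_bound[OF bounded_clinear_A] by blast
  have "(normA A y)\<^sup>2 \<le> (sqrt K * norm y)\<^sup>2" for y
  proof -
    have "(normA A y)\<^sup>2 \<le> norm (A y) * norm y"
      using cinner.Cauchy_Schwarz[of "A y" y] complex_Re_le_cmod[of "ipA A y y"]
      by (simp add: A.snorm_square ipA_def)
    also have "\<dots> \<le> K * norm y * norm y" using K by (simp add: mult_right_mono)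
    also have "\<dots> = (sqrt K * norm y)\<^sup>2"
      using \<open>K \<ge> 0\<close> by (simp add: power_mult_distrib power2_eq_square[of "norm y"])
    finally show ?thesis .
  qed
  hence "normA A y \<le> sqrt K * norm y" for y
    by (rule power2_le_imp_le) (simp add: \<open>K \<ge> 0\<close>)
  thus ?thesis using \<open>K \<ge> 0\<close> by (intro exI[of _ "sqrt K"]) simp
qed

lemma ipA_funpow_selfadjoint:
  assumes "\<And>x y. ipA A (B x) y = ipA A x (B y)"
  shows "ipA A ((B ^^ m) x) y = ipA A x ((B ^^ m) y)"
proof (induction m arbitrary: x)
  case (Suc m)
  have "ipA A ((B ^^ Suc m) x) y = ipA A ((B ^^ m) (B x)) y" by (simp only: funpow_Suc_right comp_apply)
  also have "\<dots> = ipA A x (B ((B ^^ m) y))" by (simp add: Suc.IH assms)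
  finally show ?case by simp
qed simp

text \<open>Lax's theorem on symmetrizable operators, proved by comparing the A-seminorms of the
  iterates B^(2^n) x.\<close>
lemma normA_bound_if_selfadjoint:
  assumes selfadjoint: "\<And>x y. ipA A (B x) y = ipA A x (B y)"
    and bounded: "\<And>x. norm (B x) \<le> K * norm x" and "0 \<le> K"
  shows "normA A (B x) \<le> K * normA A x"
proof -
  obtain KA where "KA \<ge> 0" and KA: "\<And>y. normA A y \<le> KA * norm y" using normA_le_norm by blast
  have norm_pow: "norm ((B ^^ m) x) \<le> K ^ m * norm x" for m
  proof (induction m)
    case (Suc m)
    have "norm ((B ^^ Suc m) x) \<le> K * norm ((B ^^ m) x)" using bounded by simp
    also have "\<dots> \<le> K * (K ^ m * norm x)" using Suc.IH \<open>0 \<le> K\<close> by (rule mult_left_mono)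
    finally show ?case by simp
  qed simp
  define k where "k n = normA A ((B ^^ 2 ^ n) x)" for n
  have "k 0 \<le> K * normA A x"
  proof (rule doubling_sequence_bound)
    fix n
    have "(k n)\<^sup>2 = Re (ipA A x ((B ^^ 2 ^ Suc n) x))"
      by (simp add: k_def A.snorm_square ipA_funpow_selfadjoint[OF selfadjoint] funpow_add mult_2)
    also have "\<dots> \<le> k (Suc n) * normA A x"
      using A.Cauchy_Schwarz complex_Re_le_cmod by (metis k_def mult.commute order_trans)
    finally show "(k n)\<^sup>2 \<le> k (Suc n) * normA A x" .
    have "k n \<le> KA * (K ^ 2 ^ n * norm x)"
      unfolding k_def using KA norm_pow \<open>KA \<ge> 0\<close> by (meson mult_left_mono order_trans)
    thus "k n \<le> KA * norm x * K ^ 2 ^ n" by (simp add: mult_ac)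
  qed (simp_all add: \<open>0 \<le> K\<close> A.snorm_nonneg)
  thus ?thesis by (simp add: k_def)
qed

lemma BA_subset_BAhalf: "BA A \<subseteq> BAhalf A"
proof
  fix T assume T: "T \<in> BA A"
  obtain K1 where "K1 \<ge> 0" and K1: "\<And>x. norm (T x) \<le> K1 * norm x"
    using bounded_clinear_bound[of T] T unfolding BA_def by blast
  obtain K2 where "K2 \<ge> 0" and K2: "\<And>x. norm (sharpA A T x) \<le> K2 * norm x"
    using bounded_clinear_bound[OF sharpA_spec(1)[OF T]] by blast
  have "normA A (sharpA A T (T x)) \<le> K2 * K1 * normA A x" for x
  proof (rule normA_bound_if_selfadjoint)
    show "ipA A (sharpA A T (T x)) y = ipA A x (sharpA A T (T y))" for x y
      by (simp add: ipA_sharpA_left[OF T] ipA_sharpA_right[OF T])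
    show "norm (sharpA A T (T x)) \<le> K2 * K1 * norm x" for x
      using K1 K2 \<open>K2 \<ge> 0\<close> by (metis mult.assoc mult_left_mono order_trans)
  qed (simp add: \<open>K1 \<ge> 0\<close> \<open>K2 \<ge> 0\<close>)
  have "(normA A (T x))\<^sup>2 \<le> (sqrt (K2 * K1 + 1) * normA A x)\<^sup>2" for x
  proof -
    have "(normA A (T x))\<^sup>2 = Re (ipA A x (sharpA A T (T x)))"
      by (simp add: A.snorm_square ipA_sharpA_right[OF T])
    also have "\<dots> \<le> normA A x * normA A (sharpA A T (T x))"
      using A.Cauchy_Schwarz complex_Re_le_cmod order_trans by blast
    also have "\<dots> \<le> normA A x * (K2 * K1 * normA A x)"
      by (intro mult_left_mono \<open>normA A (sharpA A T (T x)) \<le> _\<close> A.snorm_nonneg)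
    also have "\<dots> \<le> (K2 * K1 + 1) * (normA A x)\<^sup>2"
      by (simp add: power2_eq_square algebra_simps)
    also have "\<dots> = (sqrt (K2 * K1 + 1) * normA A x)\<^sup>2"
      using \<open>K1 \<ge> 0\<close> \<open>K2 \<ge> 0\<close> by (simp add: power_mult_distrib)
    finally show ?thesis .
  qed
  hence "normA A (T x) \<le> sqrt (K2 * K1 + 1) * normA A x" for x
    by (rule power2_le_imp_le) (simp add: \<open>K1 \<ge> 0\<close> \<open>K2 \<ge> 0\<close> A.snorm_nonneg)
  moreover have "0 < sqrt (K2 * K1 + 1)"
    using \<open>K1 \<ge> 0\<close> \<open>K2 \<ge> 0\<close> by (simp add: add_nonneg_pos)
  ultimately show "T \<in> BAhalf A" unfolding BAhalf_def by blast
qed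

lemma sharpA_in_BAhalf:
  assumes T: "T \<in> BA A"
  shows "sharpA A T \<in> BAhalf A"
proof -
  obtain c where "c > 0" and c: "\<And>x. normA A (T x) \<le> c * normA A x"
    using BA_subset_BAhalf T unfolding BAhalf_def by blast
  have "normA A (sharpA A T x) \<le> c * normA A x" for x
  proof -
    define y where "y = sharpA A T x"
    have "(normA A y)\<^sup>2 = Re (ipA A x (T y))" by (simp add: y_def A.snorm_square ipA_sharpA_left[OF T])
    also have "\<dots> \<le> normA A x * normA A (T y)"
      using A.Cauchy_Schwarz complex_Re_le_cmod order_trans by blast
    also have "\<dots> \<le> normA A x * (c * normA A y)" by (intro mult_left_mono c A.snorm_nonneg)
    finally have "normA A y * normA A y \<le> (c * normA A x) * normA A y"
      by (simp add: power2_eq_square mult_ac)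
    show ?thesis
    proof (cases "normA A y = 0")
      case True
      then show ?thesis using \<open>c > 0\<close> A.snorm_nonneg[of x] by (simp add: y_def)
    next
      case False
      hence "0 < normA A y" using A.snorm_nonneg[of y] by simp
      with mult_right_le_imp_le[OF \<open>normA A y * normA A y \<le> _\<close>] show ?thesis by (simp add: y_def)
    qed
  qed
  with \<open>c > 0\<close> show ?thesis unfolding BAhalf_def by blast
qed

lemma BAhalf_comp:
  assumes "S \<in> BAhalf A" and "T \<in> BAhalf A"
  shows "(\<lambda>x. S (T x)) \<in> BAhalf A"
proof -
  obtain c d where "c > 0" "d > 0" and c: "\<And>x. normA A (S x) \<le> c * normA A x"
    and d: "\<And>x. normA A (T x) \<le> d * normA A x"
    using assms unfolding BAhalf_def by blast
  have "normA A (S (T x)) \<le> (c * d) * normA A x" for x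
  proof -
    have "normA A (S (T x)) \<le> c * normA A (T x)" by (rule c)
    also have "\<dots> \<le> c * (d * normA A x)" using \<open>c > 0\<close> by (intro mult_left_mono d) simp
    finally show ?thesis by (simp add: mult.assoc)
  qed
  with mult_pos_pos[OF \<open>c > 0\<close> \<open>d > 0\<close>] show ?thesis unfolding BAhalf_def by blast
qed

lemma BAhalf_add:
  assumes "S \<in> BAhalf A" and "T \<in> BAhalf A"
  shows "(\<lambda>x. S x + T x) \<in> BAhalf A"
proof -
  obtain c d where "c > 0" "d > 0" and c: "\<And>x. normA A (S x) \<le> c * normA A x"
    and d: "\<And>x. normA A (T x) \<le> d * normA A x"
    using assms unfolding BAhalf_def by blast
  have "normA A (S x + T x) \<le> (c + d) * normA A x" for x
    using A.snorm_triangle[of "S x" "T x"] c[of x] d[of x] by (simp add: distrib_right)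
  with add_pos_pos[OF \<open>c > 0\<close> \<open>d > 0\<close>] show ?thesis unfolding BAhalf_def by blast
qed

lemma BAhalf_scaleC: "T \<in> BAhalf A \<Longrightarrow> (\<lambda>x. scaleC c (T x)) \<in> BAhalf A"
proof -
  assume "T \<in> BAhalf A"
  then obtain C where "C > 0" and C: "\<And>x. normA A (T x) \<le> C * normA A x" unfolding BAhalf_def by blast
  have "normA A (scaleC c (T x)) \<le> (cmod c * C + 1) * normA A x" for x
  proof -
    have "normA A (scaleC c (T x)) \<le> cmod c * (C * normA A x)"
      unfolding A.snorm_scale by (intro mult_left_mono C) simp
    also have "\<dots> \<le> (cmod c * C + 1) * normA A x"
      using A.snorm_nonneg[of x] by (simp add: distrib_right)
    finally show ?thesis .
  qed
  moreover have "0 < cmod c * C + 1" using \<open>C > 0\<close> by (simp add: add_nonneg_pos)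
  ultimately show ?thesis unfolding BAhalf_def by blast
qed

lemma normA_le_opnormA:
  assumes "T \<in> BAhalf A" and "normA A u = 1"
  shows "normA A (T u) \<le> opnormA A T"
  unfolding opnormA_def
proof (rule cSup_upper)
  obtain c where c: "\<And>x. normA A (T x) \<le> c * normA A x" using assms(1) unfolding BAhalf_def by blast
  show "bdd_above {normA A (T x) |x. normA A x = 1}"
  proof (rule bdd_aboveI)
    fix t assume "t \<in> {normA A (T x) |x. normA A x = 1}"
    then obtain x where "t = normA A (T x)" "normA A x = 1" by blast
    then show "t \<le> c" using c[of x] by simp
  qed
qed (use assms(2) in blast)

lemma normA_normalize: "normA A x \<noteq> 0 \<Longrightarrow> normA A (scaleC (complex_of_real (1 / normA A x)) x) = 1"
  by (simp add: A.snorm_scale norm_divide abs_of_nonneg[OF A.snorm_nonneg])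

lemma ipA_le_omegaA:
  assumes "T \<in> BA A"
  shows "cmod (ipA A (T v) v) \<le> omegaA A T * (normA A v)\<^sup>2"
proof (cases "normA A v = 0")
  case True
  then show ?thesis using A.Cauchy_Schwarz[of "T v" v] by simp
next
  case False
  obtain c where c: "\<And>x. normA A (T x) \<le> c * normA A x"
    using assms BA_subset_BAhalf unfolding BAhalf_def by blast
  have bdd: "bdd_above {cmod (ipA A (T x) x) |x. normA A x = 1}"
  proof (rule bdd_aboveI)
    fix t assume "t \<in> {cmod (ipA A (T x) x) |x. normA A x = 1}"
    then obtain x where "t = cmod (ipA A (T x) x)" "normA A x = 1" by blast
    then show "t \<le> c" using A.Cauchy_Schwarz[of "T x" x] c[of x] by simp
  qed
  define a where "a = complex_of_real (1 / normA A v)"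
  have "normA A (scaleC a v) = 1" unfolding a_def by (rule normA_normalize[OF False])
  hence "cmod (ipA A (T (scaleC a v)) (scaleC a v)) \<le> omegaA A T"
    unfolding omegaA_def by (intro cSup_upper[OF _ bdd]) blast
  moreover have "ipA A (T v) v = complex_of_real ((normA A v)\<^sup>2) * ipA A (T (scaleC a v)) (scaleC a v)"
    using assms False
    by (simp add: a_def BA_def bounded_clinear_scaleC A.scale_left A.scale_right power2_eq_square)
  ultimately show ?thesis
    by (simp add: norm_mult norm_power mult.commute[of "omegaA A T"] mult_left_mono)
qed

lemma normA_unit_exists:
  assumes "A \<noteq> (\<lambda>x. 0)"
  shows "\<exists>u. normA A u = 1"
proof -
  obtain x where "A x \<noteq> 0" using assms by auto
  have "normA A x \<noteq> 0"
  proof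
    assume "normA A x = 0"
    hence "ipA A x (A x) = 0" using A.Cauchy_Schwarz[of x "A x"] by simp
    thus False using \<open>A x \<noteq> 0\<close> by (simp add: ipA_def cinner_eq_zero_iff)
  qed
  thus ?thesis using normA_normalize by blast
qed

text \<open>A normalisation of x that also covers A-null vectors, which are A-orthogonal to everything.\<close>
lemma unit_factor_exists:
  assumes "normA A u0 = 1"
  shows "\<exists>u. normA A u = 1 \<and> (\<forall>y. ipA A y x = complex_of_real (normA A x) * ipA A y u)"
proof (cases "normA A x = 0")
  case True
  then show ?thesis using assms A.Cauchy_Schwarz[of _ x] by (intro exI[of _ u0]) simp
next
  case False
  define u where "u = scaleC (complex_of_real (1 / normA A x)) x"
  have "x = scaleC (complex_of_real (normA A x)) u"
    using False by (simp add: u_def scaleC_scaleC of_real_mult[symmetric] scaleC_one)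
  hence "ipA A y x = complex_of_real (normA A x) * ipA A y u" for y
    by (metis A.scale_right complex_cnj_complex_of_real)
  moreover have "normA A u = 1" unfolding u_def by (rule normA_normalize[OF False])
  ultimately show ?thesis by blast
qed

lemma Re_ipA_le_opnormA:
  assumes "T \<in> BAhalf A" and "normA A u = 1"
  shows "Re (ipA A (T u) u) \<le> opnormA A T"
proof -
  have "Re (ipA A (T u) u) \<le> normA A (T u) * normA A u"
    using complex_Re_le_cmod A.Cauchy_Schwarz order_trans by blast
  also have "\<dots> \<le> opnormA A T" using normA_le_opnormA[OF assms] assms(2) by simp
  finally show ?thesis .
qed

section \<open>The numerical radius estimate\<close>

lemma ipAA_block:
  "ipAA A (block P Q R S w) w =
     (complex_of_real l * ipA A (P (fst w)) (fst w) + ipA A (Q (snd w)) (fst w))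
     + (complex_of_real (1 - l) * ipA A (P (fst w)) (fst w) + ipA A (R (fst w)) (snd w))
     + ipA A (S (snd w)) (snd w)"
  by (simp add: block_def ipAA_def A.add_left algebra_simps)

lemma PQ_part_le:
  assumes P: "P \<in> BA A" and Q: "Q \<in> BA A" and "0 \<le> l"
    and w: "normAA A w = 1" and u: "normA A u = 1"
    and factor: "\<And>y. ipA A y (fst w) = complex_of_real a * ipA A y u"
    and N: "normA A (P u) \<le> N"
    and m: "Re (ipA A (scaleC (complex_of_real (l\<^sup>2)) (P (sharpA A P u)) + Q (sharpA A Q u)) u) \<le> m"
  shows "cmod (complex_of_real l * ipA A (P (fst w)) (fst w) + ipA A (Q (snd w)) (fst w))
    \<le> (l * N + sqrt m) / 2"
proof -
  define e where "e = (u, 0::'a)"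
  define g where "g = (scaleC (complex_of_real l) (sharpA A P u), sharpA A Q u)"
  have uu: "ipA A u u = 1" using A.of_real_snorm_square[of u] u by simp
  have "complex_of_real l * ipA A (P (fst w)) (fst w) + ipA A (Q (snd w)) (fst w)
      = ipAA A e w * ipAA A w g"
    by (simp add: e_def g_def ipAA_def factor uu A.scale_right ipA_sharpA_right[OF P]
        ipA_sharpA_right[OF Q] algebra_simps)
  also have "cmod \<dots> \<le> (normAA A e * normAA A g + cmod (ipAA A e g)) / 2"
    by (rule AA.Buzano[OF w])
  also have "\<dots> \<le> (sqrt m + l * N) / 2"
  proof -
    have "normAA A e = 1" using uu by (simp add: e_def normAA_def ipAA_def)
    moreover have "ipAA A g g = ipA A (scaleC (complex_of_real (l\<^sup>2)) (P (sharpA A P u)) + Q (sharpA A Q u)) u"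
      by (simp add: g_def ipAA_def A.add_left A.scale_left A.scale_right ipA_sharpA_right[OF P]
          ipA_sharpA_right[OF Q] power2_eq_square)
    hence "normAA A g \<le> sqrt m" using m by (simp add: normAA_def)
    moreover have "cmod (ipAA A e g) \<le> l * N"
    proof -
      have "ipAA A e g = complex_of_real l * ipA A (P u) u"
        by (simp add: e_def g_def ipAA_def A.scale_right ipA_sharpA_right[OF P])
      moreover have "cmod (ipA A (P u) u) \<le> N" using A.Cauchy_Schwarz[of "P u" u] u N by simp
      ultimately show ?thesis using \<open>0 \<le> l\<close> by (simp add: norm_mult mult_left_mono)
    qed
    ultimately show ?thesis by simp
  qed
  finally show ?thesis by simp
qed

text \<open>The map t \<mapsto> sqrt (t^2 + r) is 1-Lipschitz, which lets the bound c \<le> p be traded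
  for c \<le> q.\<close>
lemma plus_sqrt_le:
  fixes c p q r n m :: real
  assumes "0 \<le> c" "c \<le> p" "c \<le> q" "p \<le> n" "q\<^sup>2 + r \<le> m" "0 \<le> r"
  shows "c + sqrt (p\<^sup>2 + r) \<le> n + sqrt m"
proof (cases "p \<le> q")
  case True
  have "p\<^sup>2 \<le> q\<^sup>2" using True assms by (simp add: power_mono)
  hence "sqrt (p\<^sup>2 + r) \<le> sqrt m" using assms by (intro real_sqrt_le_mono) linarith
  thus ?thesis using assms by linarith
next
  case False
  have "0 \<le> m" using assms by (smt (verit) zero_le_power2)
  have "q \<le> sqrt m" using assms by (intro real_le_rsqrt) linarith
  have "p\<^sup>2 + r \<le> (p - q + sqrt m)\<^sup>2"
  proof -
    have "(p - q + sqrt m)\<^sup>2 = (p - q)\<^sup>2 + 2 * (p - q) * sqrt m + m"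
      using \<open>0 \<le> m\<close> by (simp add: power2_eq_square algebra_simps)
    moreover have "2 * (p - q) * q \<le> 2 * (p - q) * sqrt m"
      using False \<open>q \<le> sqrt m\<close> by (intro mult_left_mono) auto
    ultimately show ?thesis using assms by (simp add: power2_eq_square algebra_simps)
  qed
  hence "sqrt (p\<^sup>2 + r) \<le> p - q + sqrt m"
    using False \<open>0 \<le> m\<close> by (intro real_le_lsqrt) auto
  thus ?thesis using assms by linarith
qed

lemma PR_Buzano_terms_le:
  assumes P: "P \<in> BA A" and R: "R \<in> BA A" and "l \<le> 1" and u: "normA A u = 1"
    and N: "normA A (P u) \<le> N"
    and m: "Re (ipA A (scaleC (complex_of_real ((1 - l)\<^sup>2)) (P (sharpA A P u)) + sharpA A R (R u)) u) \<le> m"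
  shows "normAA A (scaleC (complex_of_real (1 - l)) (P u), R u)
      + cmod (ipAA A (scaleC (complex_of_real (1 - l)) (P u), R u) (u, 0)) \<le> (1 - l) * N + sqrt m"
proof -
  have cl: "cmod (1 - complex_of_real l) = 1 - l"
    using \<open>l \<le> 1\<close> by (metis abs_of_nonneg diff_ge_0_iff_ge norm_of_real of_real_1 of_real_diff)
  have c: "cmod (ipAA A (scaleC (complex_of_real (1 - l)) (P u), R u) (u, 0))
      = (1 - l) * cmod (ipA A (P u) u)"
    by (simp add: ipAA_def A.scale_left norm_mult cl)
  have "normAA A (scaleC (complex_of_real (1 - l)) (P u), R u)
      = sqrt (((1 - l) * normA A (P u))\<^sup>2 + (normA A (R u))\<^sup>2)"
    by (simp add: normAA_def ipAA_def A.self_scale A.snorm_square power_mult_distrib cl)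
  moreover have "(1 - l) * cmod (ipA A (P u) u) + sqrt (((1 - l) * normA A (P u))\<^sup>2 + (normA A (R u))\<^sup>2)
      \<le> (1 - l) * N + sqrt m"
  proof (rule plus_sqrt_le)
    show "(1 - l) * cmod (ipA A (P u) u) \<le> (1 - l) * normA A (P u)"
      using A.Cauchy_Schwarz[of "P u" u] u \<open>l \<le> 1\<close> by (simp add: mult_left_mono)
    show "(1 - l) * cmod (ipA A (P u) u) \<le> (1 - l) * normA A (sharpA A P u)"
      unfolding ipA_sharpA_right[OF P]
      using A.Cauchy_Schwarz[of u "sharpA A P u"] u \<open>l \<le> 1\<close> by (simp add: mult_left_mono)
    show "(1 - l) * normA A (P u) \<le> (1 - l) * N" using N \<open>l \<le> 1\<close> by (simp add: mult_left_mono)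
    have "Re (ipA A (scaleC (complex_of_real ((1 - l)\<^sup>2)) (P (sharpA A P u)) + sharpA A R (R u)) u)
        = ((1 - l) * normA A (sharpA A P u))\<^sup>2 + (normA A (R u))\<^sup>2"
      by (simp add: A.add_left A.scale_left ipA_sharpA_right[OF P] ipA_sharpA_left[OF R]
          A.snorm_square power_mult_distrib)
    thus "((1 - l) * normA A (sharpA A P u))\<^sup>2 + (normA A (R u))\<^sup>2 \<le> m" using m by simp
  qed (use \<open>l \<le> 1\<close> in simp_all)
  ultimately show ?thesis unfolding c by linarith
qed

lemma PR_part_le:
  assumes P: "P \<in> BA A" and R: "R \<in> BA A" and "l \<le> 1"
    and w: "normAA A w = 1" and u: "normA A u = 1"
    and factor: "\<And>y. ipA A y (fst w) = complex_of_real a * ipA A y u"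
    and N: "normA A (P u) \<le> N"
    and m: "Re (ipA A (scaleC (complex_of_real ((1 - l)\<^sup>2)) (P (sharpA A P u)) + sharpA A R (R u)) u) \<le> m"
  shows "cmod (complex_of_real (1 - l) * ipA A (P (fst w)) (fst w) + ipA A (R (fst w)) (snd w))
    \<le> ((1 - l) * N + sqrt m) / 2"
proof -
  define e where "e = (u, 0::'a)"
  define h where "h = (scaleC (complex_of_real (1 - l)) (P u), R u)"
  have uu: "ipA A u u = 1" using A.of_real_snorm_square[of u] u by simp
  have factor': "ipA A (fst w) y = complex_of_real a * ipA A u y" for y
    by (metis A.cnj_eq complex_cnj_complex_of_real complex_cnj_mult factor)
  have "complex_of_real (1 - l) * ipA A (P (fst w)) (fst w) + ipA A (R (fst w)) (snd w)
      = ipAA A h w * ipAA A w e"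
    by (simp add: e_def h_def ipAA_def factor' uu A.scale_left ipA_sharpA_right[OF P]
        ipA_sharpA_right[OF R] algebra_simps)
  also have "cmod \<dots> \<le> (normAA A h * normAA A e + cmod (ipAA A h e)) / 2"
    by (rule AA.Buzano[OF w])
  also have "\<dots> \<le> ((1 - l) * N + sqrt m) / 2"
    using PR_Buzano_terms_le[OF P R \<open>l \<le> 1\<close> u N m] uu
    by (simp add: e_def h_def normAA_def ipAA_def)
  finally show ?thesis .
qed

lemma omegaA_nonneg:
  assumes "T \<in> BA A" and "normA A u = 1"
  shows "0 \<le> omegaA A T"
proof -
  have "cmod (ipA A (T u) u) \<le> omegaA A T" using ipA_le_omegaA[OF assms(1), of u] assms(2) by simp
  thus ?thesis using norm_ge_zero order_trans by blast
qed

lemma snd_part_le_omegaA: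
  assumes S: "S \<in> BA A" and "normA A u = 1" and w: "normAA A w = 1"
  shows "cmod (ipA A (S (snd w)) (snd w)) \<le> omegaA A S"
proof -
  have "Re (ipAA A w w) = 1" using w by (simp add: normAA_def)
  hence "(normA A (fst w))\<^sup>2 + (normA A (snd w))\<^sup>2 = 1" by (simp add: ipAA_def A.snorm_square)
  hence snd_le: "(normA A (snd w))\<^sup>2 \<le> 1" using zero_le_power2[of "normA A (fst w)"] by linarith
  have "cmod (ipA A (S (snd w)) (snd w)) \<le> omegaA A S * (normA A (snd w))\<^sup>2" by (rule ipA_le_omegaA[OF S])
  also have "\<dots> \<le> omegaA A S" by (rule mult_left_le[OF snd_le omegaA_nonneg[OF assms(1,2)]])
  finally show ?thesis .
qed

lemma ipAA_block_le:
  assumes P: "P \<in> BA A" and Q: "Q \<in> BA A" and R: "R \<in> BA A" and S: "S \<in> BA A"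
    and "0 \<le> l" and "l \<le> 1" and unit: "normA A u0 = 1" and w: "normAA A w = 1"
  shows "cmod (ipAA A (block P Q R S w) w) \<le>
    (1/2) * (opnormA A P + 2 * omegaA A S
      + sqrt (opnormA A (\<lambda>x. scaleC (complex_of_real (l^2)) (P (sharpA A P x)) + Q (sharpA A Q x)))
      + sqrt (opnormA A (\<lambda>x. scaleC (complex_of_real ((1 - l)^2)) (P (sharpA A P x)) + sharpA A R (R x))))"
    (is "_ \<le> (1/2) * (?N + 2 * ?W + sqrt (opnormA A ?M1) + sqrt (opnormA A ?M2))")
proof -
  obtain u where u: "normA A u = 1"
    and factor: "\<And>y. ipA A y (fst w) = complex_of_real (normA A (fst w)) * ipA A y u"
    using unit_factor_exists[OF unit] by blast
  note in_BAhalf = BA_subset_BAhalf[THEN subsetD]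
  have PPs: "(\<lambda>x. P (sharpA A P x)) \<in> BAhalf A"
    by (rule BAhalf_comp[OF in_BAhalf[OF P] sharpA_in_BAhalf[OF P]])
  have M1: "?M1 \<in> BAhalf A"
    by (rule BAhalf_add[OF BAhalf_scaleC[OF PPs] BAhalf_comp[OF in_BAhalf[OF Q] sharpA_in_BAhalf[OF Q]]])
  have M2: "?M2 \<in> BAhalf A"
    by (rule BAhalf_add[OF BAhalf_scaleC[OF PPs] BAhalf_comp[OF sharpA_in_BAhalf[OF R] in_BAhalf[OF R]]])
  have m: "Re (ipA A (?M1 u) u) \<le> opnormA A ?M1" "Re (ipA A (?M2 u) u) \<le> opnormA A ?M2"
    by (rule Re_ipA_le_opnormA[OF M1 u], rule Re_ipA_le_opnormA[OF M2 u])
  have N: "normA A (P u) \<le> ?N" using normA_le_opnormA[OF in_BAhalf[OF P] u] .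
  have "cmod (ipA A (S (snd w)) (snd w)) \<le> ?W" by (rule snd_part_le_omegaA[OF S u w])
  moreover note PQ_part_le[OF P Q \<open>0 \<le> l\<close> w u factor N m(1)]
    PR_part_le[OF P R \<open>l \<le> 1\<close> w u factor N m(2)]
  moreover have "cmod (ipAA A (block P Q R S w) w)
      \<le> cmod (complex_of_real l * ipA A (P (fst w)) (fst w) + ipA A (Q (snd w)) (fst w))
        + cmod (complex_of_real (1 - l) * ipA A (P (fst w)) (fst w) + ipA A (R (fst w)) (snd w))
        + cmod (ipA A (S (snd w)) (snd w))"
    unfolding ipAA_block[where l = l] by (meson norm_triangle_ineq order_trans add_mono order_refl)
  ultimately have "cmod (ipAA A (block P Q R S w) w) \<le>
      (l * ?N + sqrt (opnormA A ?M1)) / 2 + ((1 - l) * ?N + sqrt (opnormA A ?M2)) / 2 + ?W"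
    by linarith
  thus ?thesis by (simp add: field_simps)
qed

end

theorem theorem2p4:
  fixes A P Q R S :: "'a::chilbert_space \<Rightarrow> 'a" and l :: real
  assumes "positive_op A" and "A \<noteq> (\<lambda>x. 0)"
    and "P \<in> BA A" and "Q \<in> BA A" and "R \<in> BA A" and "S \<in> BA A"
    and "0 \<le> l" and "l \<le> 1"
  shows "omegaAA A (block P Q R S) \<le>
    (1/2) * (opnormA A P + 2 * omegaA A S
      + sqrt (opnormA A (\<lambda>x. scaleC (complex_of_real (l^2)) (P (sharpA A P x)) + Q (sharpA A Q x)))
      + sqrt (opnormA A (\<lambda>x. scaleC (complex_of_real ((1 - l)^2)) (P (sharpA A P x)) + sharpA A R (R x))))"
proof -
  interpret positive_operator A by unfold_locales (fact assms(1))
  obtain u where u: "normA A u = 1" using normA_unit_exists[OF assms(2)] by blast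
  have "normAA A (u, 0) = 1" using u by (simp add: normAA_def ipAA_def normA_def)
  hence "{cmod (ipAA A (block P Q R S w) w) |w. normAA A w = 1} \<noteq> {}" by blast
  then show ?thesis
    unfolding omegaAA_def by (rule cSup_least) (use ipAA_block_le[OF assms(3-8) u] in blast)
qed

end
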